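(* In the setting below, suppose $0<\eta\le\frac{1}{L(K+1)}$. Then for every $k\ge0$ the iterates of the PIAG method satisfy \[ -\|d_k\|^2\le -\frac{\mu}{4}F_{k+1}+\eta L\sum_{j=(k-K)_+}^{k-1}\|d_j\|^2 . \]
   Context: Let $m,n\ge 1$ be integers and $\|\cdot\|$ the Euclidean norm on $\mathbb{R}^n$. For $i=1,\dots,m$, let $f_i:\mathbb{R}^n\to\mathbb{R}$ be continuously differentiable with $\|\nabla f_i(x)-\nabla f_i(y)\|\le L_i\|x-y\|$ for all $x,y$, where $L_i\ge 0$ (the $f_i$ are not assumed convex). Let $f=\frac1m\sum_{i=1}^m f_i$ and $L=\frac1m\sum_{i=1}^m L_i$. Assume $f$ is $\mu$-strongly convex for some $\mu>0$ (i.e. $x\mapsto f(x)-\frac{\mu}{2}\|x\|^2$ is convex). Let $r:\mathbb{R}^n\to(-\infty,\infty]$ be proper, closed and convex, let $F=f+r$, and let $x^*$ be the unique minimizer of $F$. For $\eta>0$ define $\mathrm{prox}_r^\eta(y)=\arg\min_{x\in\mathbb{R}^n}\{\frac12\|x-y\|^2+\eta r(x)\}$. PIAG method: fix an integer $K\ge 0$, a step size $\eta>0$ and $x_0\in\mathbb{R}^n$; for each $k\ge0$ and each $i$ let $\tau_{i,k}$ be any (deterministically chosen) integer with $\max(k-K,0)\le\tau_{i,k}\le k$; set $g_k=\frac1m\sum_{i=1}^m\nabla f_i(x_{\tau_{i,k}})$ and $x_{k+1}=\mathrm{prox}_r^\eta(x_k-\eta g_k)$. Define $d_k=(x_{k+1}-x_k)/\eta$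 and $F_k=F(x_k)-F(x^* )$. Write $(t)_+=\max(t,0)$; empty sums are zero. *)

theory Defs
  imports "HOL-Analysis.Analysis" "HOL-Library.Extended_Real"
begin

definition proper_fun :: "('a \<Rightarrow> ereal) \<Rightarrow> bool" where
  "proper_fun r \<longleftrightarrow> (\<forall>x. r x \<noteq> -\<infinity>) \<and> (\<exists>x. r x \<noteq> \<infinity>)"

definition epigraph_e :: "('a \<Rightarrow> ereal) \<Rightarrow> ('a \<times> real) set" where
  "epigraph_e r = {(x, t). r x \<le> ereal t}"

definition closed_fun :: "('a::topological_space \<Rightarrow> ereal) \<Rightarrow> bool" where
  "closed_fun r \<longleftrightarrow> closed (epigraph_e r)"

definition convex_fun :: "('a::real_vector \<Rightarrow> ereal) \<Rightarrow> bool" where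
  "convex_fun r \<longleftrightarrow> convex (epigraph_e r)"

definition prox :: "('a::real_normed_vector \<Rightarrow> ereal) \<Rightarrow> real \<Rightarrow> 'a \<Rightarrow> 'a" where
  "prox r \<eta> y = (THE x. \<forall>z. ereal (norm (x - y)^2 / 2) + ereal \<eta> * r x
                          \<le> ereal (norm (z - y)^2 / 2) + ereal \<eta> * r z)"

end

theory Submission
  imports Defs
begin

text \<open>The proximal step \<open>x_{k+1} = prox (x_k - \<eta> g_k)\<close> satisfies the variational inequality
  \<open>\<eta> (r x_{k+1} - r z) \<le> \<langle>x_{k+1} - x_k + \<eta> g_k, z - x_{k+1}\<rangle>\<close>; adding the strong convexity
  inequality of \<open>f\<close> at \<open>x_{k+1}\<close> and applying Young's inequality bounds \<open>F_{k+1}\<close> by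
  \<open>|\<nabla>f(x_{k+1}) - g_k - d_k|\<^sup>2 / (2\<mu>)\<close>. Each delayed gradient in \<open>g_k\<close> is evaluated at most
  \<open>K + 1\<close> steps away from \<open>x_{k+1}\<close>, so the gradient error is at most \<open>\<eta> L\<close> times the length
  of the last \<open>K + 1\<close> steps; Cauchy--Schwarz and \<open>\<eta> L (K + 1) \<le> 1\<close> then turn the squared
  residual into \<open>8 |d_k|\<^sup>2 + 2 \<eta> L \<Sum>|d_j|\<^sup>2\<close>.

  That \<open>prox\<close>, a definite description, denotes the proximal point at all comes from an affine
  minorant of \<open>r\<close> (separation from its closed convex epigraph): it makes the proximal
  objective coercive, so the objective attains its minimum on a compact sublevel set, and the
  minimiser is unique because the objective is strongly convex.\<close>

lemma proper_fun_ereal_real: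
  assumes "proper_fun r" "r z \<noteq> \<infinity>"
  shows "r z = ereal (real_of_ereal (r z))"
  using assms unfolding proper_fun_def by (cases "r z") auto

lemma convex_fun_combination:
  fixes r :: "'a::real_vector \<Rightarrow> ereal"
  assumes pr: "proper_fun r" and cv: "convex_fun r"
    and u: "r u \<noteq> \<infinity>" and v: "r v \<noteq> \<infinity>" and t: "0 \<le> t" "t \<le> 1"
  shows "r ((1 - t) *\<^sub>R u + t *\<^sub>R v) \<noteq> \<infinity>"
    and "real_of_ereal (r ((1 - t) *\<^sub>R u + t *\<^sub>R v))
           \<le> (1 - t) * real_of_ereal (r u) + t * real_of_ereal (r v)"
proof -
  have "(1 - t) *\<^sub>R (u, real_of_ereal (r u)) + t *\<^sub>R (v, real_of_ereal (r v)) \<in> epigraph_e r"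
    using cv t proper_fun_ereal_real[OF pr u] proper_fun_ereal_real[OF pr v]
    unfolding convex_fun_def epigraph_e_def by (intro convexD) auto
  then have le: "r ((1 - t) *\<^sub>R u + t *\<^sub>R v)
                   \<le> ereal ((1 - t) * real_of_ereal (r u) + t * real_of_ereal (r v))"
    unfolding epigraph_e_def by simp
  then show fin: "r ((1 - t) *\<^sub>R u + t *\<^sub>R v) \<noteq> \<infinity>" by auto
  from le show "real_of_ereal (r ((1 - t) *\<^sub>R u + t *\<^sub>R v))
                  \<le> (1 - t) * real_of_ereal (r u) + t * real_of_ereal (r v)"
    by (subst (asm) proper_fun_ereal_real[OF pr fin]) simp
qed

text \<open>A point strictly below the epigraph is separated from it by a hyperplane, which cannot be
  vertical because it also separates that point from the epigraph point just above it.\<close>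
lemma convex_closed_fun_affine_minorant:
  fixes r :: "'a::euclidean_space \<Rightarrow> ereal"
  assumes pr: "proper_fun r" and cv: "convex_fun r" and cl: "closed_fun r"
  obtains a b where "\<And>z. r z \<noteq> \<infinity> \<Longrightarrow> inner a z + b \<le> real_of_ereal (r z)"
proof -
  obtain x0 where x0: "r x0 \<noteq> \<infinity>" using pr unfolding proper_fun_def by auto
  define r0 where "r0 = real_of_ereal (r x0)"
  have x0e: "r x0 = ereal r0" using proper_fun_ereal_real[OF pr x0] r0_def by simp
  have "(x0, r0 - 1) \<notin> epigraph_e r" using x0e unfolding epigraph_e_def by simp
  then obtain c b where sep: "inner c (x0, r0 - 1) < b" "\<And>p. p \<in> epigraph_e r \<Longrightarrow> b < inner c p"
    using separating_hyperplane_closed_point[of "epigraph_e r"] cv cl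
    unfolding convex_fun_def closed_fun_def by blast
  obtain a1 a2 where c: "c = (a1, a2)" by (cases c)
  have epi: "(z, real_of_ereal (r z)) \<in> epigraph_e r" if "r z \<noteq> \<infinity>" for z
    using proper_fun_ereal_real[OF pr that] unfolding epigraph_e_def by simp
  have "b < inner a1 x0 + a2 * r0" using sep(2)[OF epi[OF x0]] c r0_def by simp
  moreover have "inner a1 x0 + a2 * (r0 - 1) < b" using sep(1) c by simp
  ultimately have a2: "a2 > 0" by (simp add: algebra_simps)
  show thesis
  proof
    fix z assume z: "r z \<noteq> \<infinity>"
    have "b < inner a1 z + a2 * real_of_ereal (r z)"
      using sep(2)[OF epi[OF z]] c by simp
    then show "inner (- (1 / a2) *\<^sub>R a1) z + b / a2 \<le> real_of_ereal (r z)"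
      using a2 by (simp add: field_simps)
  qed
qed

text \<open>Only meaningful where \<open>r z \<noteq> \<infinity>\<close>, since \<open>real_of_ereal \<infinity> = 0\<close>.\<close>
definition prox_objective :: "('a::real_normed_vector \<Rightarrow> ereal) \<Rightarrow> real \<Rightarrow> 'a \<Rightarrow> 'a \<Rightarrow> real" where
  "prox_objective r \<eta> y z = norm (z - y)^2 / 2 + \<eta> * real_of_ereal (r z)"

lemma prox_objective_lower_bound:
  fixes r :: "'a::real_inner \<Rightarrow> ereal"
  assumes minor: "\<And>z. r z \<noteq> \<infinity> \<Longrightarrow> inner a z + b \<le> real_of_ereal (r z)"
    and eta: "\<eta> > 0" and z: "r z \<noteq> \<infinity>"
  shows "\<eta> * (inner a y + b) - (\<eta> * norm a)^2 / 2 + (norm (z - y) - \<eta> * norm a)^2 / 2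
           \<le> prox_objective r \<eta> y z"
proof -
  have "inner a (z - y) \<ge> - (norm a * norm (z - y))"
    using Cauchy_Schwarz_ineq2[of a "z - y"] by linarith
  then have "inner a y - norm a * norm (z - y) + b \<le> real_of_ereal (r z)"
    using minor[OF z] by (simp add: inner_diff_right)
  then have "\<eta> * (inner a y + b) - \<eta> * norm a * norm (z - y) \<le> \<eta> * real_of_ereal (r z)"
    using mult_left_mono[OF _ less_imp_le[OF eta]] by (fastforce simp: algebra_simps)
  moreover have "(norm (z - y) - \<eta> * norm a)^2 / 2
      = norm (z - y)^2 / 2 - \<eta> * norm a * norm (z - y) + (\<eta> * norm a)^2 / 2"
    by (simp add: power2_eq_square field_simps)
  ultimately show ?thesis
    unfolding prox_objective_def by linarith
qed

lemma closed_prox_objective_epigraph: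
  fixes r :: "'a::euclidean_space \<Rightarrow> ereal"
  assumes pr: "proper_fun r" and cl: "closed_fun r" and eta: "\<eta> > 0"
  shows "closed {(z, t). r z \<noteq> \<infinity> \<and> prox_objective r \<eta> y z \<le> t}"
proof -
  define G where "G p = (fst p, (snd p - norm (fst p - y)^2 / 2) / \<eta>)" for p :: "'a \<times> real"
  have "(z, t) \<in> G -` epigraph_e r \<longleftrightarrow> r z \<noteq> \<infinity> \<and> prox_objective r \<eta> y z \<le> t" for z t
    using eta pr
    by (cases "r z") (auto simp: G_def epigraph_e_def prox_objective_def proper_fun_def field_simps)
  then have "{(z, t). r z \<noteq> \<infinity> \<and> prox_objective r \<eta> y z \<le> t} = G -` epigraph_e r"
    by (simp add: set_eq_iff)
  moreover have "continuous_on UNIV G"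
    unfolding G_def using eta by (intro continuous_intros) auto
  ultimately show ?thesis
    using cl unfolding closed_fun_def by (metis closed_vimage)
qed

lemma prox_objective_has_minimizer:
  fixes r :: "'a::euclidean_space \<Rightarrow> ereal"
  assumes pr: "proper_fun r" and cv: "convex_fun r" and cl: "closed_fun r" and eta: "\<eta> > 0"
  obtains p where "r p \<noteq> \<infinity>"
    and "\<And>z. r z \<noteq> \<infinity> \<Longrightarrow> prox_objective r \<eta> y p \<le> prox_objective r \<eta> y z"
proof -
  obtain a b where minor: "\<And>z. r z \<noteq> \<infinity> \<Longrightarrow> inner a z + b \<le> real_of_ereal (r z)"
    using convex_closed_fun_affine_minorant[OF pr cv cl] by blast
  obtain x0 where x0: "r x0 \<noteq> \<infinity>" using pr unfolding proper_fun_def by auto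
  define c0 where "c0 = prox_objective r \<eta> y x0"
  define lo where "lo = \<eta> * (inner a y + b) - (\<eta> * norm a)^2 / 2"
  define E where "E = {(z, t). r z \<noteq> \<infinity> \<and> prox_objective r \<eta> y z \<le> t} \<inter> snd -` {..c0}"
  have bound: "z \<in> cball y (\<eta> * norm a + sqrt (2 * (c0 - lo))) \<and> t \<in> {lo..c0}"
    if "(z, t) \<in> E" for z t
  proof -
    from that have z: "r z \<noteq> \<infinity>" and "prox_objective r \<eta> y z \<le> t" "t \<le> c0"
      unfolding E_def by auto
    moreover have "lo + (norm (z - y) - \<eta> * norm a)^2 / 2 \<le> prox_objective r \<eta> y z"
      unfolding lo_def by (intro prox_objective_lower_bound minor eta z)
    ultimately have "lo \<le> t" "(norm (z - y) - \<eta> * norm a)^2 \<le> 2 * (c0 - lo)"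
      using zero_le_power2[of "norm (z - y) - \<eta> * norm a"] by argo+
    moreover from this(2) have "norm (z - y) - \<eta> * norm a \<le> sqrt (2 * (c0 - lo))"
      by (rule real_le_rsqrt)
    ultimately show ?thesis using \<open>t \<le> c0\<close> by (simp add: dist_norm norm_minus_commute)
  qed
  have "closed E"
    unfolding E_def by (intro closed_Int closed_prox_objective_epigraph[OF pr cl eta] closed_vimage_snd) auto
  moreover have "E \<subseteq> cball y (\<eta> * norm a + sqrt (2 * (c0 - lo))) \<times> {lo..c0}"
    using bound by auto
  ultimately have "compact E"
    by (metis bounded_Times bounded_cball bounded_closed_interval bounded_subset
        compact_eq_bounded_closed)
  moreover have "(x0, c0) \<in> E" unfolding E_def c0_def using x0 by simp
  ultimately obtain q where "q \<in> E" and qmin: "\<And>q'. q' \<in> E \<Longrightarrow> snd q \<le> snd q'"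
    using continuous_attains_inf[of E snd] continuous_on_snd[OF continuous_on_id] by blast
  then obtain p tp where q: "q = (p, tp)" and p: "r p \<noteq> \<infinity>"
    and ptp: "prox_objective r \<eta> y p \<le> tp" and "tp \<le> c0"
    unfolding E_def by (cases q) auto
  show thesis
  proof (rule that[OF p])
    fix z assume z: "r z \<noteq> \<infinity>"
    show "prox_objective r \<eta> y p \<le> prox_objective r \<eta> y z"
    proof (cases "prox_objective r \<eta> y z \<le> c0")
      case True
      then have "(z, prox_objective r \<eta> y z) \<in> E" using z unfolding E_def by simp
      then show ?thesis using qmin ptp q by fastforce
    next
      case False
      then show ?thesis using ptp \<open>tp \<le> c0\<close> by linarith
    qed
  qed
qed

text \<open>First-order optimality: compare \<open>p\<close> with the points \<open>p + t (z - p)\<close>, divide by \<open>t\<close>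
  and let \<open>t \<rightarrow> 0\<^sup>+\<close>.\<close>
lemma prox_objective_minimizer_variational_ineq:
  fixes r :: "'a::real_inner \<Rightarrow> ereal"
  assumes pr: "proper_fun r" and cv: "convex_fun r" and eta: "\<eta> > 0" and p: "r p \<noteq> \<infinity>"
    and pmin: "\<And>z. r z \<noteq> \<infinity> \<Longrightarrow> prox_objective r \<eta> y p \<le> prox_objective r \<eta> y z"
    and z: "r z \<noteq> \<infinity>"
  shows "\<eta> * (real_of_ereal (r p) - real_of_ereal (r z)) \<le> inner (p - y) (z - p)"
proof (rule tendsto_lowerbound)
  let ?c = "norm (z - p)^2 / 2"
  show "((\<lambda>t. inner (p - y) (z - p) + t * ?c) \<longlongrightarrow> inner (p - y) (z - p)) (at_right 0)"
    by (intro tendsto_eq_intros) auto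
  show "\<forall>\<^sub>F t in at_right 0.
          \<eta> * (real_of_ereal (r p) - real_of_ereal (r z)) \<le> inner (p - y) (z - p) + t * ?c"
    using eventually_at_right_real[OF zero_less_one]
  proof (rule eventually_mono)
    fix t :: real assume "t \<in> {0<..<1}"
    then have t: "0 < t" "t \<le> 1" by auto
    define zt where "zt = (1 - t) *\<^sub>R p + t *\<^sub>R z"
    have step: "zt - y = (p - y) + t *\<^sub>R (z - p)" unfolding zt_def by (simp add: algebra_simps)
    have dist: "norm (zt - y)^2 = norm (p - y)^2 + 2 * t * inner (p - y) (z - p) + t^2 * norm (z - p)^2"
      unfolding step using dot_norm[of "p - y" "t *\<^sub>R (z - p)"]
      by (simp add: power_mult_distrib)
    have "prox_objective r \<eta> y p \<le> prox_objective r \<eta> y zt"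
      using pmin convex_fun_combination(1)[OF pr cv p z t(1)[THEN less_imp_le] t(2)]
      unfolding zt_def by blast
    moreover have "real_of_ereal (r zt) \<le> (1 - t) * real_of_ereal (r p) + t * real_of_ereal (r z)"
      using convex_fun_combination(2)[OF pr cv p z t(1)[THEN less_imp_le] t(2)] unfolding zt_def .
    then have "\<eta> * real_of_ereal (r zt)
                 \<le> \<eta> * real_of_ereal (r p) - t * (\<eta> * (real_of_ereal (r p) - real_of_ereal (r z)))"
      using mult_left_mono[of _ _ \<eta>] eta by (fastforce simp: algebra_simps)
    moreover have "t * (inner (p - y) (z - p) + t * ?c)
                     = t * inner (p - y) (z - p) + t^2 * norm (z - p)^2 / 2"
      by (simp add: power2_eq_square algebra_simps)
    ultimately have "t * (\<eta> * (real_of_ereal (r p) - real_of_ereal (r z)))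
                       \<le> t * (inner (p - y) (z - p) + t * ?c)"
      unfolding prox_objective_def dist by argo
    then show "\<eta> * (real_of_ereal (r p) - real_of_ereal (r z)) \<le> inner (p - y) (z - p) + t * ?c"
      using t by simp
  qed
qed simp

lemma prox_eq_minimizer:
  fixes r :: "'a::euclidean_space \<Rightarrow> ereal"
  assumes pr: "proper_fun r" and cv: "convex_fun r" and eta: "\<eta> > 0" and p: "r p \<noteq> \<infinity>"
    and pmin: "\<And>z. r z \<noteq> \<infinity> \<Longrightarrow> prox_objective r \<eta> y p \<le> prox_objective r \<eta> y z"
  shows "prox r \<eta> y = p"
proof -
  define \<Phi> where "\<Phi> z = ereal (norm (z - y)^2 / 2) + ereal \<eta> * r z" for z
  have \<Phi>_finite: "\<Phi> z = ereal (prox_objective r \<eta> y z)" if "r z \<noteq> \<infinity>" for z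
    unfolding \<Phi>_def prox_objective_def by (subst proper_fun_ereal_real[OF pr that]) simp
  have \<Phi>_infinite: "\<Phi> z = \<infinity>" if "r z = \<infinity>" for z
    using that eta unfolding \<Phi>_def by simp
  have p_min: "\<forall>z. \<Phi> p \<le> \<Phi> z"
    using pmin by (metis \<Phi>_finite \<Phi>_infinite ereal_less_eq(1,3) p)
  have "q = p" if q_min: "\<forall>z. \<Phi> q \<le> \<Phi> z" for q
  proof -
    have q: "r q \<noteq> \<infinity>"
    proof
      assume "r q = \<infinity>"
      then have "\<infinity> \<le> \<Phi> p" using q_min \<Phi>_infinite by metis
      then show False using \<Phi>_finite[OF p] by simp
    qed
    have qmin: "prox_objective r \<eta> y q \<le> prox_objective r \<eta> y z" if "r z \<noteq> \<infinity>" for z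
      using q_min \<Phi>_finite[OF q] \<Phi>_finite[OF that] by (metis ereal_less_eq(3))
    have "\<eta> * (real_of_ereal (r p) - real_of_ereal (r q)) \<le> inner (p - y) (q - p)"
      by (rule prox_objective_minimizer_variational_ineq[OF pr cv eta p pmin q])
    moreover have "\<eta> * (real_of_ereal (r q) - real_of_ereal (r p)) \<le> inner (q - y) (p - q)"
      by (rule prox_objective_minimizer_variational_ineq[OF pr cv eta q qmin p])
    moreover have "inner (p - y) (q - p) + inner (q - y) (p - q) = - (norm (q - p)^2)"
      by (simp add: power2_norm_eq_inner inner_diff_left inner_diff_right inner_commute algebra_simps)
    moreover have "\<eta> * (real_of_ereal (r p) - real_of_ereal (r q))
                     + \<eta> * (real_of_ereal (r q) - real_of_ereal (r p)) = 0"
      by (simp add: algebra_simps)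
    ultimately have "norm (q - p)^2 \<le> 0" by linarith
    then show "q = p" by simp
  qed
  with p_min show ?thesis
    unfolding prox_def \<Phi>_def[symmetric] by (rule the_equality)
qed

lemma prox_variational_ineq:
  fixes r :: "'a::euclidean_space \<Rightarrow> ereal"
  assumes pr: "proper_fun r" and cv: "convex_fun r" and cl: "closed_fun r" and eta: "\<eta> > 0"
  shows "r (prox r \<eta> y) \<noteq> \<infinity>"
    and "r z \<noteq> \<infinity> \<Longrightarrow> \<eta> * (real_of_ereal (r (prox r \<eta> y)) - real_of_ereal (r z))
                           \<le> inner (prox r \<eta> y - y) (z - prox r \<eta> y)"
proof -
  obtain p where p: "r p \<noteq> \<infinity>"
    and pmin: "\<And>z. r z \<noteq> \<infinity> \<Longrightarrow> prox_objective r \<eta> y p \<le> prox_objective r \<eta> y z"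
    using prox_objective_has_minimizer[OF pr cv cl eta] by blast
  have "prox r \<eta> y = p" by (rule prox_eq_minimizer[OF pr cv eta p pmin])
  then show "r (prox r \<eta> y) \<noteq> \<infinity>"
    and "r z \<noteq> \<infinity> \<Longrightarrow> \<eta> * (real_of_ereal (r (prox r \<eta> y)) - real_of_ereal (r z))
                           \<le> inner (prox r \<eta> y - y) (z - prox r \<eta> y)"
    using p prox_objective_minimizer_variational_ineq[OF pr cv eta p pmin] by auto
qed

lemma convex_on_above_tangent:
  fixes h :: "'a::real_normed_vector \<Rightarrow> real"
  assumes cvx: "convex_on UNIV h" and der: "(h has_derivative h') (at x)"
  shows "h x + h' (y - x) \<le> h y"
proof -
  define \<phi> where "\<phi> t = h (x + t *\<^sub>R (y - x))" for t :: real
  have "convex_on UNIV \<phi>"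
  proof (rule convex_onI)
    fix t a b :: real assume "0 < t" "t < 1"
    have "x + ((1 - t) * a + t * b) *\<^sub>R (y - x)
            = (1 - t) *\<^sub>R (x + a *\<^sub>R (y - x)) + t *\<^sub>R (x + b *\<^sub>R (y - x))"
      by (simp add: algebra_simps)
    then show "\<phi> ((1 - t) *\<^sub>R a + t *\<^sub>R b) \<le> (1 - t) * \<phi> a + t * \<phi> b"
      unfolding \<phi>_def using convex_onD[OF cvx, of t] \<open>0 < t\<close> \<open>t < 1\<close> by simp
  qed simp
  moreover have "(\<phi> has_field_derivative h' (y - x)) (at 0)"
  proof -
    have "((\<lambda>t. x + t *\<^sub>R (y - x)) has_derivative (\<lambda>s. s *\<^sub>R (y - x))) (at 0)"
      by (auto intro!: derivative_eq_intros)
    from has_derivative_compose[OF this] der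
    have "(\<phi> has_derivative (\<lambda>s. h' (s *\<^sub>R (y - x)))) (at 0)"
      unfolding \<phi>_def by simp
    moreover have "(\<lambda>s. h' (s *\<^sub>R (y - x))) = (*) (h' (y - x))"
      using has_derivative_bounded_linear[OF der] by (auto simp: fun_eq_iff linear_simps)
    ultimately show ?thesis by (simp add: has_field_derivative_def)
  qed
  ultimately have "h' (y - x) \<le> \<phi> 1 - \<phi> 0"
    using convex_on_imp_above_tangent[of UNIV \<phi> 0 1 "h' (y - x)"] by simp
  then show ?thesis unfolding \<phi>_def by simp
qed

lemma strongly_convex_gradient_ineq:
  fixes f :: "'a::real_inner \<Rightarrow> real"
  assumes strong: "convex_on UNIV (\<lambda>y. f y - \<mu> / 2 * norm y^2)"
    and der: "(f has_derivative (\<lambda>w. inner G w)) (at x)"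
  shows "f x + inner G (z - x) + \<mu> / 2 * norm (z - x)^2 \<le> f z"
proof -
  have "((\<lambda>y. \<mu> / 2 * inner y y) has_derivative (\<lambda>w. \<mu> / 2 * (inner w x + inner x w))) (at x)"
    by (intro derivative_eq_intros) auto
  from has_derivative_diff[OF der this]
  have "((\<lambda>y. f y - \<mu> / 2 * inner y y)
          has_derivative (\<lambda>w. inner G w - \<mu> / 2 * (inner w x + inner x w))) (at x)" .
  from convex_on_above_tangent[OF _ this, of z] strong
  have "f x - \<mu> / 2 * inner x x + (inner G (z - x) - \<mu> / 2 * (inner (z - x) x + inner x (z - x)))
          \<le> f z - \<mu> / 2 * inner z z"
    by (simp add: power2_norm_eq_inner)
  then show ?thesis
    by (simp add: power2_norm_eq_inner inner_diff_left inner_diff_right inner_commute algebra_simps)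
qed

lemma inner_le_young:
  fixes u v :: "'a::real_inner"
  assumes "\<mu> > 0"
  shows "inner u v \<le> norm u^2 / (2 * \<mu>) + \<mu> / 2 * norm v^2"
proof -
  have "0 \<le> norm (u - \<mu> *\<^sub>R v)^2" by simp
  also have "\<dots> = norm u^2 - 2 * \<mu> * inner u v + \<mu>^2 * norm v^2"
    unfolding power2_norm_eq_inner
    by (simp add: inner_diff_left inner_diff_right inner_commute power2_eq_square algebra_simps)
  finally show ?thesis using assms by (simp add: field_simps power2_eq_square)
qed

lemma norm_diff_le_sum_norm_steps:
  fixes x :: "nat \<Rightarrow> 'a::real_normed_vector"
  assumes "s \<le> n"
  shows "norm (x n - x s) \<le> (\<Sum>j = s..<n. norm (x (Suc j) - x j))"
  using norm_sum[of "\<lambda>j. x (Suc j) - x j" "{s..<n}"] sum_Suc_diff'[OF assms, of x] by simp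

lemma norm_average_diff_le:
  fixes gf :: "nat \<Rightarrow> 'a::real_normed_vector \<Rightarrow> 'b::real_normed_vector"
  assumes lip: "\<And>i y z. i < m \<Longrightarrow> norm (gf i y - gf i z) \<le> Ls i * norm (y - z)"
    and Ls_nonneg: "\<And>i. i < m \<Longrightarrow> Ls i \<ge> 0"
    and close: "\<And>i. i < m \<Longrightarrow> norm (u - v i) \<le> D"
  shows "norm ((1 / real m) *\<^sub>R (\<Sum>i<m. gf i u) - (1 / real m) *\<^sub>R (\<Sum>i<m. gf i (v i)))
           \<le> (1 / real m) * (\<Sum>i<m. Ls i) * D"
proof -
  have "norm ((1 / real m) *\<^sub>R (\<Sum>i<m. gf i u) - (1 / real m) *\<^sub>R (\<Sum>i<m. gf i (v i)))
          = (1 / real m) * norm (\<Sum>i<m. gf i u - gf i (v i))"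
    by (simp add: sum_subtractf flip: scaleR_diff_right)
  also have "\<dots> \<le> (1 / real m) * (\<Sum>i<m. norm (gf i u - gf i (v i)))"
    by (intro mult_left_mono norm_sum) auto
  also have "\<dots> \<le> (1 / real m) * (\<Sum>i<m. Ls i * D)"
    using order_trans[OF lip mult_left_mono[OF close Ls_nonneg]]
    by (intro mult_left_mono sum_mono) auto
  finally show ?thesis by (simp add: sum_distrib_right)
qed

lemma has_derivative_average:
  fixes fs :: "nat \<Rightarrow> 'a::real_inner \<Rightarrow> real"
  assumes "\<And>i. i < m \<Longrightarrow> (fs i has_derivative (\<lambda>h. inner (gf i y) h)) (at y)"
  shows "((\<lambda>y. (1 / real m) * (\<Sum>i<m. fs i y))
           has_derivative (\<lambda>h. inner ((1 / real m) *\<^sub>R (\<Sum>i<m. gf i y)) h)) (at y)"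
proof -
  have "((\<lambda>y. (1 / real m) * (\<Sum>i<m. fs i y))
          has_derivative (\<lambda>h. (1 / real m) * (\<Sum>i<m. inner (gf i y) h))) (at y)"
    using assms by (intro has_derivative_mult_right has_derivative_sum) auto
  then show ?thesis by (simp add: inner_sum_left)
qed

lemma prox_gradient_step_gap:
  fixes r :: "'a::euclidean_space \<Rightarrow> ereal" and f :: "'a \<Rightarrow> real"
  assumes pr: "proper_fun r" and cv: "convex_fun r" and cl: "closed_fun r"
    and eta: "\<eta> > 0" and mu: "\<mu> > 0"
    and strong: "convex_on UNIV (\<lambda>y. f y - \<mu> / 2 * norm y^2)"
    and der: "(f has_derivative (\<lambda>w. inner G w)) (at x')"
    and step: "x' = prox r \<eta> (x - \<eta> *\<^sub>R g)"
    and z: "r z \<noteq> \<infinity>"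
  shows "f x' + real_of_ereal (r x') - (f z + real_of_ereal (r z))
           \<le> norm (G - g - (1 / \<eta>) *\<^sub>R (x' - x))^2 / (2 * \<mu>)"
proof -
  define d where "d = (1 / \<eta>) *\<^sub>R (x' - x)"
  have "x' - (x - \<eta> *\<^sub>R g) = \<eta> *\<^sub>R (d + g)"
    using eta by (simp add: d_def algebra_simps)
  then have "\<eta> * (real_of_ereal (r x') - real_of_ereal (r z)) \<le> \<eta> * inner (d + g) (z - x')"
    using prox_variational_ineq(2)[OF pr cv cl eta z, of "x - \<eta> *\<^sub>R g"] step by simp
  then have "real_of_ereal (r x') - real_of_ereal (r z) \<le> inner (d + g) (z - x')"
    using eta by simp
  moreover have "f x' + inner G (z - x') + \<mu> / 2 * norm (z - x')^2 \<le> f z"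
    by (rule strongly_convex_gradient_ineq[OF strong der])
  moreover have "inner (G - g - d) (x' - z) \<le> norm (G - g - d)^2 / (2 * \<mu>) + \<mu> / 2 * norm (x' - z)^2"
    by (rule inner_le_young[OF mu])
  moreover have "inner (G - g - d) (x' - z) = inner (d + g) (z - x') - inner G (z - x')"
    by (simp add: inner_diff_left inner_diff_right inner_add_left algebra_simps)
  ultimately show ?thesis
    unfolding d_def[symmetric] by (simp add: norm_minus_commute)
qed

lemma sum_squared_le_sum_of_squares_card_le:
  fixes f :: "'a \<Rightarrow> real"
  assumes "card I \<le> K"
  shows "(\<Sum>i\<in>I. f i)^2 \<le> (\<Sum>i\<in>I. (f i)^2) * K"
proof -
  have "(\<Sum>i\<in>I. f i)^2 \<le> (\<Sum>i\<in>I. (f i)^2) * card I"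
    by (rule sum_squared_le_sum_of_squares)
  also have "\<dots> \<le> (\<Sum>i\<in>I. (f i)^2) * K"
    using assms by (intro mult_left_mono sum_nonneg) auto
  finally show ?thesis .
qed

lemma norm_delayed_iterate_diff_le:
  fixes x d :: "nat \<Rightarrow> 'a::real_normed_vector"
  assumes step: "\<And>j. x (Suc j) - x j = \<eta> *\<^sub>R d j" and eta: "\<eta> \<ge> 0"
    and delay: "k - K \<le> t" "t \<le> k"
  shows "norm (x (Suc k) - x t) \<le> \<eta> * ((\<Sum>j\<in>{k - K..<k}. norm (d j)) + norm (d k))"
proof -
  have "norm (x (Suc k) - x t) \<le> (\<Sum>j = t..<Suc k. norm (x (Suc j) - x j))"
    using delay by (intro norm_diff_le_sum_norm_steps) simp
  also have "\<dots> = \<eta> * (\<Sum>j = t..<Suc k. norm (d j))"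
    using eta by (simp add: step sum_distrib_left del: sum.op_ivl_Suc)
  also have "\<dots> \<le> \<eta> * (\<Sum>j = k - K..<Suc k. norm (d j))"
    using delay eta by (intro mult_left_mono sum_mono2) auto
  also have "\<dots> = \<eta> * ((\<Sum>j\<in>{k - K..<k}. norm (d j)) + norm (d k))"
    by (simp add: sum.atLeastLessThan_Suc del: sum.op_ivl_Suc)
  finally show ?thesis .
qed

text \<open>The residual bound \<open>S\<close> gives \<open>S\<^sup>2 \<le> 2((1 + e) n)\<^sup>2 + 2 (e A)\<^sup>2 \<le> 8 n\<^sup>2 + 2 e Q\<close>, using
  \<open>e \<le> 1\<close> and Cauchy--Schwarz \<open>A\<^sup>2 \<le> K Q\<close> with \<open>e K \<le> 1\<close>.\<close>
lemma descent_ineq_of_residual_bound: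
  fixes \<Delta> S n A Q e \<mu> :: real and K :: nat
  assumes mu: "\<mu> > 0" and gap: "\<Delta> \<le> S^2 / (2 * \<mu>)" and S0: "0 \<le> S"
    and S: "S \<le> (1 + e) * n + e * A" and n0: "0 \<le> n"
    and AQ: "A^2 \<le> Q * K" and Q0: "0 \<le> Q"
    and e0: "0 \<le> e" and eK: "e * (K + 1) \<le> 1"
  shows "- (n^2) \<le> - (\<mu> / 4) * \<Delta> + e * Q"
proof -
  have e1: "e \<le> 1" and eK': "e * K \<le> 1"
    using eK e0 by (simp_all add: algebra_simps) (smt (verit) mult_nonneg_nonneg of_nat_0_le_iff)
  have "S^2 \<le> ((1 + e) * n + e * A)^2" using S S0 by (intro power_mono) auto
  also have "\<dots> \<le> 2 * ((1 + e) * n)^2 + 2 * (e * A)^2"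
    by (smt (verit) zero_le_power2 power2_sum power2_diff)
  also have "((1 + e) * n)^2 \<le> (2 * n)^2" using e1 e0 n0 by (intro power_mono mult_right_mono) auto
  also have "(e * A)^2 = e * (e * A^2)" by (simp add: power2_eq_square)
  also have "e * A^2 \<le> e * (Q * K)" using AQ e0 by (intro mult_left_mono)
  also have "e * (Q * K) = Q * (e * K)" by simp
  also have "Q * (e * K) \<le> Q" using eK' Q0 by (simp add: mult_left_le)
  finally have "S^2 \<le> 8 * n^2 + 2 * (e * Q)" using e0 by (simp add: power2_eq_square mult_left_mono)
  moreover have "\<mu> * \<Delta> \<le> S^2 / 2" using gap mu by (simp add: field_simps)
  moreover have "e * Q \<ge> 0" using e0 Q0 by simp
  ultimately show ?thesis by simp
qed

theorem lemma3:
  fixes m K :: nat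
    and fs :: "nat \<Rightarrow> 'a::euclidean_space \<Rightarrow> real"
    and gf :: "nat \<Rightarrow> 'a \<Rightarrow> 'a"
    and Ls :: "nat \<Rightarrow> real"
    and f :: "'a \<Rightarrow> real"
    and L \<mu> \<eta> :: real
    and r :: "'a \<Rightarrow> ereal"
    and F :: "'a \<Rightarrow> ereal"
    and xs :: 'a
    and \<tau> :: "nat \<Rightarrow> nat \<Rightarrow> nat"
    and x :: "nat \<Rightarrow> 'a"
    and g d :: "nat \<Rightarrow> 'a"
    and k :: nat
  assumes m_pos: "m \<ge> 1"
    and grad: "\<And>i y. i < m \<Longrightarrow> (fs i has_derivative (\<lambda>h. gf i y \<bullet> h)) (at y)"
    and grad_cont: "\<And>i. i < m \<Longrightarrow> continuous_on UNIV (gf i)"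
    and Ls_nonneg: "\<And>i. i < m \<Longrightarrow> Ls i \<ge> 0"
    and lip: "\<And>i y z. i < m \<Longrightarrow> norm (gf i y - gf i z) \<le> Ls i * norm (y - z)"
    and f_def: "f = (\<lambda>y. (1 / real m) * (\<Sum>i<m. fs i y))"
    and L_def: "L = (1 / real m) * (\<Sum>i<m. Ls i)"
    and mu_pos: "\<mu> > 0"
    and strong: "convex_on UNIV (\<lambda>y. f y - \<mu> / 2 * (norm y)^2)"
    and r_proper: "proper_fun r"
    and r_closed: "closed_fun r"
    and r_convex: "convex_fun r"
    and F_def: "F = (\<lambda>y. ereal (f y) + r y)"
    and xs_min: "\<And>y. F xs \<le> F y"
    and eta_pos: "\<eta> > 0"
    and eta_le: "\<eta> * (L * (real K + 1)) \<le> 1"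
    and tau_lo: "\<And>i j. i < m \<Longrightarrow> j - K \<le> \<tau> i j"
    and tau_hi: "\<And>i j. i < m \<Longrightarrow> \<tau> i j \<le> j"
    and g_def: "\<And>j. g j = (1 / real m) *\<^sub>R (\<Sum>i<m. gf i (x (\<tau> i j)))"
    and x_step: "\<And>j. x (Suc j) = prox r \<eta> (x j - \<eta> *\<^sub>R g j)"
    and d_def: "\<And>j. d j = (1 / \<eta>) *\<^sub>R (x (Suc j) - x j)"
  shows "ereal (- ((norm (d k))^2))
           \<le> ereal (- (\<mu> / 4)) * (F (x (Suc k)) - F xs)
             + ereal (\<eta> * L * (\<Sum>j\<in>{k - K..<k}. (norm (d j))^2))"
proof -
  define x' where "x' = x (Suc k)"
  define G where "G = (1 / real m) *\<^sub>R (\<Sum>i<m. gf i x')"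
  define A where "A = (\<Sum>j\<in>{k - K..<k}. norm (d j))"
  define Q where "Q = (\<Sum>j\<in>{k - K..<k}. (norm (d j))^2)"
  have step: "x (Suc j) - x j = \<eta> *\<^sub>R d j" for j using d_def eta_pos by simp
  have x'_step: "x' = prox r \<eta> (x k - \<eta> *\<^sub>R g k)" unfolding x'_def by (rule x_step)
  then have rx': "r x' \<noteq> \<infinity>" using prox_variational_ineq(1)[OF r_proper r_convex r_closed eta_pos] by simp
  then have rxs: "r xs \<noteq> \<infinity>" using xs_min[of x'] by (cases "r xs") (auto simp: F_def)
  have "(f has_derivative (\<lambda>w. inner G w)) (at x')"
    unfolding f_def G_def by (intro has_derivative_average grad)
  from prox_gradient_step_gap[OF r_proper r_convex r_closed eta_pos mu_pos strong this x'_step rxs]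
  have gap: "f x' + real_of_ereal (r x') - (f xs + real_of_ereal (r xs))
               \<le> norm (G - g k - d k)^2 / (2 * \<mu>)"
    by (simp add: d_def x'_def)
  have "norm (G - g k) \<le> L * (\<eta> * (A + norm (d k)))"
    unfolding G_def g_def L_def A_def x'_def using step eta_pos tau_lo tau_hi
    by (intro norm_average_diff_le[OF lip Ls_nonneg] norm_delayed_iterate_diff_le) auto
  then have residual: "norm (G - g k - d k) \<le> (1 + \<eta> * L) * norm (d k) + \<eta> * L * A"
    using norm_triangle_ineq4[of "G - g k" "d k"] by (simp add: algebra_simps)
  have AQ: "A^2 \<le> Q * K"
    unfolding A_def Q_def by (rule sum_squared_le_sum_of_squares_card_le) simp
  have Q0: "0 \<le> Q" unfolding Q_def by (simp add: sum_nonneg)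
  have "0 \<le> \<eta> * L"
    using eta_pos Ls_nonneg unfolding L_def by (intro mult_nonneg_nonneg sum_nonneg) auto
  from descent_ineq_of_residual_bound[OF mu_pos gap norm_ge_zero residual norm_ge_zero AQ Q0 this]
  have "- (norm (d k)^2)
          \<le> - (\<mu> / 4) * (f x' + real_of_ereal (r x') - (f xs + real_of_ereal (r xs))) + \<eta> * L * Q"
    using eta_le by (simp add: algebra_simps)
  moreover obtain \<rho>' \<rho>s where "r x' = ereal \<rho>'" "r xs = ereal \<rho>s"
    using proper_fun_ereal_real[OF r_proper] rx' rxs by metis
  ultimately show ?thesis
    unfolding F_def x'_def[symmetric] Q_def[symmetric] by simp
qed

end
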